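(* Let $\theta$ and $\rho$ be regular infinite cardinals with $\theta < \rho < \kappa$, and let $K$ be a $\kappa$-complete ideal on $\kappa$ with $NS_\kappa|E^\kappa_\theta \subseteq K$. Then there are $c_\alpha \subseteq E^\kappa_{\geq\rho} \cap \alpha$ with $\sup c_\alpha = \alpha$, for $\alpha \in E^\kappa_\theta \cap acc(E^\kappa_{\geq\rho})$, such that $\{\alpha \in E^\kappa_\theta \cap acc(E^\kappa_{\geq\rho}) : c_\alpha \subseteq C\} \in K^+$ for every closed unbounded subset $C$ of $\kappa$.
   Context: $\kappa$ is a regular uncountable cardinal. An ideal on $\kappa$ is a nonempty $K \subseteq P(\kappa)$ with $\kappa \notin K$, every bounded subset of $\kappa$ in $K$, $K$ closed under subsets and under unions of two members; $K^+ = P(\kappa)\setminus K$; $\kappa$-complete means closed under unions of fewer than $\kappa$ members. For $A \subseteq \kappa$, $acc(A) = \{\alpha \in \kappa\setminus\{0\} : \sup(A\cap\alpha) = \alpha\}$. $E^\kappa_\theta = \{\alpha \in acc(\kappa) : \mathrm{cf}(\alpha) = \theta\}$, $E^\kappa_{\geq\rho} = \{\alpha \in acc(\kappa) : \mathrm{cf}(\alpha) \geq \rho\}$. $NS_\kappa|E^\kappa_\theta = \{B \subseteq \kappa : B \cap E^\kappa_\theta \text{ is nonstationary}\}$. *)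

theory Defs
  imports Main "HOL-Library.Countable_Set"
begin

text \<open>The regular uncountable cardinal kappa is represented by a well-order r
(a cardinal order, i.e. an initial ordinal) whose field is the set of ordinals
below kappa.  For alpha in Field r, underS r alpha is the set of ordinals below alpha.\<close>

definition lt :: "'a rel \<Rightarrow> 'a \<Rightarrow> 'a \<Rightarrow> bool" where
  "lt r x y \<longleftrightarrow> (x, y) \<in> r \<and> x \<noteq> y"

definition sup_eq :: "'a rel \<Rightarrow> 'a set \<Rightarrow> 'a \<Rightarrow> bool" where
  "sup_eq r A \<alpha> \<longleftrightarrow> A \<subseteq> underS r \<alpha> \<and> (\<forall>\<beta>. lt r \<beta> \<alpha> \<longrightarrow> (\<exists>\<gamma>\<in>A. lt r \<beta> \<gamma>))"

definition acc :: "'a rel \<Rightarrow> 'a set \<Rightarrow> 'a set" where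
  "acc r A = {\<alpha> \<in> Field r. underS r \<alpha> \<noteq> {} \<and> sup_eq r (A \<inter> underS r \<alpha>) \<alpha>}"

text \<open>cf(alpha) = theta, for theta in Field r (as an ordinal below kappa):
the least cardinality of a cofinal subset of alpha is |theta|\<close>
definition cf_eq :: "'a rel \<Rightarrow> 'a \<Rightarrow> 'a \<Rightarrow> bool" where
  "cf_eq r \<alpha> \<theta> \<longleftrightarrow>
     (\<exists>A. sup_eq r A \<alpha> \<and> (card_of A, card_of (underS r \<theta>)) \<in> ordIso) \<and>
     (\<forall>B. sup_eq r B \<alpha> \<longrightarrow> (card_of (underS r \<theta>), card_of B) \<in> ordLeq)"

definition cf_ge :: "'a rel \<Rightarrow> 'a \<Rightarrow> 'a \<Rightarrow> bool" where
  "cf_ge r \<alpha> \<rho> \<longleftrightarrow> (\<forall>B. sup_eq r B \<alpha> \<longrightarrow> (card_of (underS r \<rho>), card_of B) \<in> ordLeq)"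

definition E_eq :: "'a rel \<Rightarrow> 'a \<Rightarrow> 'a set" where
  "E_eq r \<theta> = {\<alpha> \<in> acc r (Field r). cf_eq r \<alpha> \<theta>}"

definition E_ge :: "'a rel \<Rightarrow> 'a \<Rightarrow> 'a set" where
  "E_ge r \<rho> = {\<alpha> \<in> acc r (Field r). cf_ge r \<alpha> \<rho>}"

definition regular_infinite_cardinal :: "'a rel \<Rightarrow> 'a \<Rightarrow> bool" where
  "regular_infinite_cardinal r \<theta> \<longleftrightarrow> \<theta> \<in> Field r \<and> infinite (underS r \<theta>) \<and>
     (\<forall>\<beta>. lt r \<beta> \<theta> \<longrightarrow> (card_of (underS r \<beta>), card_of (underS r \<theta>)) \<in> ordLess) \<and>
     cf_eq r \<theta> \<theta>"

definition regular_uncountable :: "'a rel \<Rightarrow> bool" where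
  "regular_uncountable r \<longleftrightarrow> Card_order r \<and> \<not> countable (Field r) \<and>
     (\<forall>A \<subseteq> Field r. (\<forall>\<beta>\<in>Field r. \<exists>\<gamma>\<in>A. lt r \<beta> \<gamma>) \<longrightarrow> (card_of A, r) \<in> ordIso)"

definition bounded :: "'a rel \<Rightarrow> 'a set \<Rightarrow> bool" where
  "bounded r B \<longleftrightarrow> (\<exists>\<beta>\<in>Field r. B \<subseteq> underS r \<beta>)"

definition is_ideal :: "'a rel \<Rightarrow> 'a set set \<Rightarrow> bool" where
  "is_ideal r K \<longleftrightarrow> K \<subseteq> Pow (Field r) \<and> K \<noteq> {} \<and> Field r \<notin> K \<and>
     (\<forall>B \<subseteq> Field r. bounded r B \<longrightarrow> B \<in> K) \<and>
     (\<forall>A\<in>K. \<forall>B. B \<subseteq> A \<longrightarrow> B \<in> K) \<and>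
     (\<forall>A\<in>K. \<forall>B\<in>K. A \<union> B \<in> K)"

definition kappa_complete :: "'a rel \<Rightarrow> 'a set set \<Rightarrow> bool" where
  "kappa_complete r K \<longleftrightarrow> (\<forall>F \<subseteq> K. (card_of F, r) \<in> ordLess \<longrightarrow> \<Union>F \<in> K)"

definition club :: "'a rel \<Rightarrow> 'a set \<Rightarrow> bool" where
  "club r C \<longleftrightarrow> C \<subseteq> Field r \<and> (\<forall>\<beta>\<in>Field r. \<exists>\<gamma>\<in>C. lt r \<beta> \<gamma>) \<and> acc r C \<subseteq> C"

definition stationary :: "'a rel \<Rightarrow> 'a set \<Rightarrow> bool" where
  "stationary r S \<longleftrightarrow> (\<forall>C. club r C \<longrightarrow> S \<inter> C \<noteq> {})"

definition NS_restr :: "'a rel \<Rightarrow> 'a \<Rightarrow> 'a set set" where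
  "NS_restr r \<theta> = {B. B \<subseteq> Field r \<and> \<not> stationary r (B \<inter> E_eq r \<theta>)}"

end

theory Submission
  imports Defs
begin

(*
  Suppose that for every club E the ladder system built from E \<inter> E_ge(\<rho>) is defeated by a
  club W(E) on a set N(E) in K.  Iterate along \<rho>: let E_i be the intersection of the clubs W(E_j)
  for j < i.  At a point \<alpha> of cofinality \<theta> < \<rho>, the ladder built from E_i \<inter> E_ge(\<rho>) is
  assembled, recursively along cofinal sets of size < \<rho>, from suprema of E_i \<inter> E_ge(\<rho>) below
  given points.  These suprema are nonincreasing in i, so by regularity of \<rho> the ladder at \<alpha> is
  constant for i \<ge> i_0.  If \<alpha> is moreover a limit of E_\<rho> \<inter> E_ge(\<rho>), the ladder is cofinal
  in \<alpha>; it equals the ladder for any E_i_1 with i_0 < i_1 < \<rho>, hence lies inside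
  E_i_1 \<subseteq> W(E_i_0), that is, \<alpha> \<in> N(E_i_0).  By \<kappa>-completeness the union of the N(E_i) is in K, whereas these points \<alpha>
  form a K-positive set because NS|E_\<theta> \<subseteq> K.
*)

unbundle cardinal_syntax

locale regular_uncountable_order =
  fixes r :: "'a rel"
  assumes regular_uncountable: "regular_uncountable r"
begin

lemma Card_order_r: "Card_order r"
  using regular_uncountable unfolding regular_uncountable_def by blast

lemma wo_rel_r: "wo_rel r"
  using Card_order_r unfolding card_order_on_def wo_rel_def by blast

lemma uncountable_Field: "\<not> countable (Field r)"
  using regular_uncountable unfolding regular_uncountable_def by blast

lemma le_refl: "x \<in> Field r \<Longrightarrow> (x, x) \<in> r"
  using refl_onD[OF wo_rel.REFL[OF wo_rel_r]] by blast

lemma le_trans: "(x, y) \<in> r \<Longrightarrow> (y, z) \<in> r \<Longrightarrow> (x, z) \<in> r"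
  using transD[OF wo_rel.TRANS[OF wo_rel_r]] by blast

lemma le_antisym: "(x, y) \<in> r \<Longrightarrow> (y, x) \<in> r \<Longrightarrow> x = y"
  using antisymD[OF wo_rel.ANTISYM[OF wo_rel_r]] by blast

lemma le_Field: "(x, y) \<in> r \<Longrightarrow> x \<in> Field r \<and> y \<in> Field r"
  by (auto simp: Field_def)

lemma lt_Field: "lt r x y \<Longrightarrow> x \<in> Field r \<and> y \<in> Field r"
  unfolding lt_def by (auto simp: Field_def)

lemma lt_imp_le: "lt r x y \<Longrightarrow> (x, y) \<in> r"
  unfolding lt_def by blast

lemma lt_irrefl: "\<not> lt r x x"
  unfolding lt_def by blast

lemma le_imp_not_lt: "(x, y) \<in> r \<Longrightarrow> \<not> lt r y x"
  unfolding lt_def using le_antisym by blast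

lemma lt_le_trans: "lt r x y \<Longrightarrow> (y, z) \<in> r \<Longrightarrow> lt r x z"
  unfolding lt_def using le_trans le_antisym by blast

lemma le_lt_trans: "(x, y) \<in> r \<Longrightarrow> lt r y z \<Longrightarrow> lt r x z"
  unfolding lt_def using le_trans le_antisym by blast

lemma lt_trans: "lt r x y \<Longrightarrow> lt r y z \<Longrightarrow> lt r x z"
  using lt_le_trans lt_imp_le by blast

lemma not_lt_imp_le: "x \<in> Field r \<Longrightarrow> y \<in> Field r \<Longrightarrow> \<not> lt r x y \<Longrightarrow> (y, x) \<in> r"
  unfolding lt_def using wo_rel.TOTALS[OF wo_rel_r] le_refl by blast

lemma not_le_imp_lt: "x \<in> Field r \<Longrightarrow> y \<in> Field r \<Longrightarrow> (x, y) \<notin> r \<Longrightarrow> lt r y x"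
  using not_lt_imp_le by blast

lemma underS_eq: "underS r x = {y. lt r y x}"
  unfolding underS_def lt_def by blast

lemma lt_induct:
  assumes "\<And>x. (\<And>y. lt r y x \<Longrightarrow> P y) \<Longrightarrow> P x"
  shows "P a"
  by (rule wo_rel.well_order_induct[OF wo_rel_r]) (use assms in \<open>auto simp: lt_def\<close>)

lemma worec_unfold:
  assumes "\<And>f g x. (\<And>y. lt r y x \<Longrightarrow> f y = g y) \<Longrightarrow> H f x = H g x"
  shows "wo_rel.worec r H x = H (wo_rel.worec r H) x"
proof -
  have "wo_rel.adm_wo r H"
    unfolding wo_rel.adm_wo_def[OF wo_rel_r]
  proof (intro allI impI)
    fix f g :: "'a \<Rightarrow> 'b" and x
    assume "\<forall>y\<in>underS r x. f y = g y"
    then show "H f x = H g x"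
      by (intro assms) (simp add: underS_eq)
  qed
  then show ?thesis
    using fun_cong[OF wo_rel.worec_fixpoint[OF wo_rel_r]] by blast
qed

abbreviation unbounded :: "'a set \<Rightarrow> bool" where
  "unbounded X \<equiv> \<forall>\<beta>\<in>Field r. \<exists>x\<in>X. lt r \<beta> x"

lemma exists_greater:
  assumes "x \<in> Field r"
  shows "\<exists>y. lt r x y"
proof (rule ccontr)
  assume "\<nexists>y. lt r x y"
  then have "Field r = under r x"
    using assms not_lt_imp_le le_Field unfolding under_def by blast
  then show False
    using Card_order_infinite_not_under[OF Card_order_r] uncountable_Field countable_finite by blast
qed

lemma countable_ordLess: "countable X \<Longrightarrow> |X| <o r"
proof (rule ccontr)
  assume "countable X" and "\<not> |X| <o r"
  then have "|Field r| \<le>o |X|"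
    using not_ordLess_iff_ordLeq[OF wo_rel.WELL[OF wo_rel_r] card_of_Well_order]
      card_of_Field_ordIso[OF Card_order_r] ordIso_ordLeq_trans by blast
  then obtain f where "inj_on f (Field r)" "f ` Field r \<subseteq> X"
    using card_of_ordLeq by metis
  then show False
    using \<open>countable X\<close> uncountable_Field countable_subset countable_image_inj_on by metis
qed

lemma ordLess_strict_upper_bound:
  assumes X: "X \<subseteq> Field r" and small: "|X| <o r" and \<beta>: "\<beta> \<in> Field r"
  obtains g where "lt r \<beta> g" and "\<And>x. x \<in> X \<Longrightarrow> lt r x g"
proof -
  let ?Y = "insert \<beta> X"
  have Y: "?Y \<subseteq> Field r"
    using X \<beta> by blast
  have "infinite (Field r)"
    using uncountable_Field countable_finite by blast
  then have "|{\<beta>} \<union> X| <o r"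
    using card_of_Un_ordLess_infinite_Field[OF _ Card_order_r countable_ordLess small] by blast
  then have "\<not> |?Y| =o r"
    using not_ordLess_ordIso by simp
  moreover have "unbounded ?Y \<Longrightarrow> |?Y| =o r"
    using regular_uncountable Y unfolding regular_uncountable_def by blast
  ultimately have "\<not> unbounded ?Y"
    by blast
  then obtain b where b: "b \<in> Field r" "\<And>x. x \<in> ?Y \<Longrightarrow> \<not> lt r b x"
    by blast
  obtain g where "lt r b g"
    using exists_greater[OF b(1)] by blast
  moreover have "\<And>x. x \<in> ?Y \<Longrightarrow> (x, b) \<in> r"
    using b Y not_lt_imp_le by blast
  ultimately show ?thesis
    using that le_lt_trans by blast
qed

abbreviation supr :: "'a set \<Rightarrow> 'a" where
  "supr \<equiv> wo_rel.supr r"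

lemma
  assumes "B \<subseteq> under r u"
  shows supr_in_Field: "supr B \<in> Field r"
    and supr_upper: "b \<in> B \<Longrightarrow> (b, supr B) \<in> r"
    and supr_least: "y \<in> Field r \<Longrightarrow> (\<And>b. b \<in> B \<Longrightarrow> (b, y) \<in> r) \<Longrightarrow> (supr B, y) \<in> r"
proof -
  have Above: "Above r B \<subseteq> Field r" "Above r B \<noteq> {}"
  proof -
    show "Above r B \<subseteq> Field r"
      unfolding Above_def by blast
    obtain x where "x \<in> Field r"
      using uncountable_Field by fastforce
    then have "u \<in> Above r B \<or> Above r B = Field r"
      using assms le_Field unfolding Above_def under_def by blast
    then show "Above r B \<noteq> {}"
      using \<open>x \<in> Field r\<close> by blast
  qed
  show "supr B \<in> Field r"
    using wo_rel.minim_inField[OF wo_rel_r Above] unfolding wo_rel.supr_def[OF wo_rel_r] .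
  show "b \<in> B \<Longrightarrow> (b, supr B) \<in> r"
    using wo_rel.minim_in[OF wo_rel_r Above] unfolding wo_rel.supr_def[OF wo_rel_r] Above_def by blast
  show "(supr B, y) \<in> r" if "y \<in> Field r" "\<And>b. b \<in> B \<Longrightarrow> (b, y) \<in> r"
    using wo_rel.minim_least[OF wo_rel_r Above(1)] that unfolding wo_rel.supr_def[OF wo_rel_r] Above_def by blast
qed

lemma lt_supr_imp:
  assumes "B \<subseteq> under r u" and "lt r y (supr B)"
  shows "\<exists>b\<in>B. lt r y b"
proof (rule ccontr)
  assume "\<not> (\<exists>b\<in>B. lt r y b)"
  then have "\<And>b. b \<in> B \<Longrightarrow> (b, y) \<in> r"
    using assms not_lt_imp_le lt_Field le_Field unfolding under_def by blast
  then have "(supr B, y) \<in> r"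
    using supr_least[OF assms(1)] lt_Field[OF assms(2)] by blast
  then show False
    using assms(2) le_imp_not_lt by blast
qed

lemma supr_mono:
  assumes "B' \<subseteq> B" and "B \<subseteq> under r u"
  shows "(supr B', supr B) \<in> r"
proof (rule supr_least)
  show "B' \<subseteq> under r u"
    using assms by blast
  show "supr B \<in> Field r"
    using supr_in_Field[OF assms(2)] .
  show "(b, supr B) \<in> r" if "b \<in> B'" for b
    using supr_upper[OF assms(2)] that assms(1) by blast
qed

lemma sup_eq_supr:
  assumes "B \<subseteq> under r u" and "supr B \<notin> B"
  shows "sup_eq r B (supr B)"
  unfolding sup_eq_def
proof (intro conjI subsetI allI impI)
  show "b \<in> underS r (supr B)" if "b \<in> B" for b
    using supr_upper[OF assms(1) that] that assms(2) unfolding underS_def by auto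
  show "\<exists>\<gamma>\<in>B. lt r \<beta> \<gamma>" if "lt r \<beta> (supr B)" for \<beta>
    using lt_supr_imp[OF assms(1) that] .
qed

lemma accI:
  assumes "lt r x \<delta>" and "\<And>\<zeta>. lt r \<zeta> \<delta> \<Longrightarrow> \<exists>y\<in>Y. lt r \<zeta> y \<and> lt r y \<delta>"
  shows "\<delta> \<in> acc r Y"
  using assms lt_Field unfolding acc_def sup_eq_def underS_eq by blast

lemma accD:
  assumes "\<alpha> \<in> acc r Y" and "lt r \<beta> \<alpha>"
  shows "\<exists>y\<in>Y. lt r \<beta> y \<and> lt r y \<alpha>"
  using assms unfolding acc_def sup_eq_def underS_eq by blast

lemma acc_subset_Field: "acc r Y \<subseteq> Field r"
  unfolding acc_def by blast

lemma acc_mono: "X \<subseteq> Y \<Longrightarrow> acc r X \<subseteq> acc r Y"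
  unfolding acc_def sup_eq_def by blast

lemma acc_if_sup_eq:
  assumes "sup_eq r B \<delta>" and "B \<subseteq> Y" and "B \<noteq> {}"
  shows "\<delta> \<in> acc r Y"
proof -
  obtain b where "b \<in> B"
    using assms(3) by blast
  then have "lt r b \<delta>"
    using assms(1) unfolding sup_eq_def underS_eq by blast
  then show ?thesis
  proof (rule accI)
    fix \<zeta> assume "lt r \<zeta> \<delta>"
    then show "\<exists>y\<in>Y. lt r \<zeta> y \<and> lt r y \<delta>"
      using assms(1,2) unfolding sup_eq_def underS_eq by blast
  qed
qed

lemma acc_acc_subset: "acc r (acc r X) \<subseteq> acc r X"
proof
  fix \<alpha> assume \<alpha>: "\<alpha> \<in> acc r (acc r X)"
  obtain x where "lt r x \<alpha>"
    using \<alpha> unfolding acc_def underS_eq by blast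
  then show "\<alpha> \<in> acc r X"
  proof (rule accI)
    fix \<zeta> assume "lt r \<zeta> \<alpha>"
    then obtain y where y: "y \<in> acc r X" "lt r \<zeta> y" "lt r y \<alpha>"
      using accD[OF \<alpha>] by blast
    then obtain x where "x \<in> X" "lt r \<zeta> x" "lt r x y"
      using accD[OF y(1,2)] by blast
    then show "\<exists>y\<in>X. lt r \<zeta> y \<and> lt r y \<alpha>"
      using lt_trans[OF _ y(3)] by blast
  qed
qed

lemma exists_sup_of_increasing_nat:
  assumes \<eta>: "\<And>n. \<eta> n \<in> Field r" and inc: "\<And>n. lt r (\<eta> n) (\<eta> (Suc n))"
  shows "\<exists>\<delta>. (\<forall>n. lt r (\<eta> n) \<delta>) \<and> (\<forall>\<zeta>. lt r \<zeta> \<delta> \<longrightarrow> (\<exists>n. lt r \<zeta> (\<eta> n)))"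
proof -
  have "range \<eta> \<subseteq> Field r"
    using \<eta> by blast
  moreover have "|range \<eta>| <o r"
    by (rule countable_ordLess) simp
  ultimately obtain g where "\<And>x. x \<in> range \<eta> \<Longrightarrow> lt r x g"
    using ordLess_strict_upper_bound[OF _ _ \<eta>[of 0]] by blast
  then have bounded: "range \<eta> \<subseteq> under r g"
    using lt_imp_le unfolding under_def by blast
  have "lt r (\<eta> n) (supr (range \<eta>))" for n
    using lt_le_trans[OF inc supr_upper[OF bounded]] by blast
  moreover have "\<exists>n. lt r \<zeta> (\<eta> n)" if "lt r \<zeta> (supr (range \<eta>))" for \<zeta>
    using lt_supr_imp[OF bounded that] by blast
  ultimately show ?thesis
    by blast
qed

lemma exists_bound_meeting_all:
  assumes unbounded: "\<And>C. C \<in> F \<Longrightarrow> unbounded C" and small: "|F| <o r" and y: "y \<in> Field r"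
  shows "\<exists>g. lt r y g \<and> (\<forall>C\<in>F. \<exists>c\<in>C. lt r y c \<and> lt r c g)"
proof -
  define next_in where "next_in C = (SOME c. c \<in> C \<and> lt r y c)" for C
  have next_in: "next_in C \<in> C \<and> lt r y (next_in C)" if "C \<in> F" for C
  proof -
    have "\<exists>c. c \<in> C \<and> lt r y c"
      using unbounded[OF that] y by blast
    then show ?thesis
      unfolding next_in_def by (rule someI_ex)
  qed
  have "next_in ` F \<subseteq> Field r"
    using next_in lt_Field by blast
  moreover have "|next_in ` F| <o r"
    by (rule ordLeq_ordLess_trans[OF card_of_image small])
  ultimately obtain g where "lt r y g" "\<And>x. x \<in> next_in ` F \<Longrightarrow> lt r x g"
    using ordLess_strict_upper_bound y by blast
  then have "\<forall>C\<in>F. \<exists>c\<in>C. lt r y c \<and> lt r c g"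
    using next_in by blast
  then show ?thesis
    using \<open>lt r y g\<close> by blast
qed

lemma exists_common_limit_point:
  assumes unbounded: "\<And>C. C \<in> F \<Longrightarrow> unbounded C" and small: "|F| <o r" and \<beta>: "\<beta> \<in> Field r"
  shows "\<exists>\<delta>. lt r \<beta> \<delta> \<and> (\<forall>C\<in>F. \<delta> \<in> acc r C)"
proof -
  define h where "h y = (SOME g. lt r y g \<and> (\<forall>C\<in>F. \<exists>c\<in>C. lt r y c \<and> lt r c g))" for y
  have h: "lt r y (h y) \<and> (\<forall>C\<in>F. \<exists>c\<in>C. lt r y c \<and> lt r c (h y))" if "y \<in> Field r" for y
    unfolding h_def by (rule someI_ex[OF exists_bound_meeting_all[OF unbounded small that]])
  define \<eta> where "\<eta> n = (h ^^ n) \<beta>" for n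
  have \<eta>_Suc: "\<eta> (Suc n) = h (\<eta> n)" for n
    by (simp add: \<eta>_def)
  have \<eta>_Field: "\<eta> n \<in> Field r" for n
  proof (induction n)
    case 0
    then show ?case
      using \<beta> by (simp add: \<eta>_def)
  next
    case (Suc n)
    then have "lt r (\<eta> n) (h (\<eta> n))"
      using h by blast
    then show ?case
      using lt_Field \<eta>_Suc by simp
  qed
  have "lt r (\<eta> n) (\<eta> (Suc n))" for n
    using h[OF \<eta>_Field] \<eta>_Suc by simp
  then have "\<exists>\<delta>. (\<forall>n. lt r (\<eta> n) \<delta>) \<and> (\<forall>\<zeta>. lt r \<zeta> \<delta> \<longrightarrow> (\<exists>n. lt r \<zeta> (\<eta> n)))"
    by (rule exists_sup_of_increasing_nat[OF \<eta>_Field])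
  then obtain \<delta> where \<delta>: "\<And>n. lt r (\<eta> n) \<delta>" "\<And>\<zeta>. lt r \<zeta> \<delta> \<Longrightarrow> \<exists>n. lt r \<zeta> (\<eta> n)"
    by blast
  have "\<delta> \<in> acc r C" if C: "C \<in> F" for C
  proof (rule accI[OF \<delta>(1)])
    fix \<zeta> assume "lt r \<zeta> \<delta>"
    then obtain n where n: "lt r \<zeta> (\<eta> n)"
      using \<delta>(2) by blast
    obtain c where "c \<in> C" "lt r (\<eta> n) c" "lt r c (\<eta> (Suc n))"
      using h[OF \<eta>_Field[of n]] C unfolding \<eta>_Suc by blast
    then show "\<exists>c\<in>C. lt r \<zeta> c \<and> lt r c \<delta>"
      using lt_trans[OF n] lt_trans[OF _ \<delta>(1)] by blast
  qed
  moreover have "lt r \<beta> \<delta>"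
    using \<delta>(1)[of 0] by (simp add: \<eta>_def)
  ultimately show ?thesis
    by blast
qed

lemma club_acc:
  assumes "X \<subseteq> Field r" and "unbounded X"
  shows "club r (acc r X)"
  unfolding club_def
proof (intro conjI ballI acc_subset_Field acc_acc_subset)
  fix \<beta> assume \<beta>: "\<beta> \<in> Field r"
  have "|{X}| <o r"
    by (rule countable_ordLess) simp
  moreover have "\<And>C. C \<in> {X} \<Longrightarrow> unbounded C"
    using assms(2) by blast
  ultimately have "\<exists>\<delta>. lt r \<beta> \<delta> \<and> (\<forall>C\<in>{X}. \<delta> \<in> acc r C)"
    using exists_common_limit_point[OF _ _ \<beta>] by blast
  then show "\<exists>\<gamma>\<in>acc r X. lt r \<beta> \<gamma>"
    by blast
qed

lemma club_Inter:
  assumes clubs: "\<And>C. C \<in> F \<Longrightarrow> club r C" and small: "|F| <o r"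
  shows "club r (Field r \<inter> \<Inter>F)"
  unfolding club_def
proof (intro conjI ballI subsetI)
  show "x \<in> Field r" if "x \<in> Field r \<inter> \<Inter>F" for x
    using that by blast
next
  fix \<alpha> assume \<alpha>: "\<alpha> \<in> acc r (Field r \<inter> \<Inter>F)"
  have "\<alpha> \<in> C" if C: "C \<in> F" for C
  proof -
    have "\<alpha> \<in> acc r C"
      using acc_mono[of _ C] \<alpha> C by blast
    then show ?thesis
      using clubs[OF C] unfolding club_def by blast
  qed
  then show "\<alpha> \<in> Field r \<inter> \<Inter>F"
    using \<alpha> acc_subset_Field by blast
next
  fix \<beta> assume \<beta>: "\<beta> \<in> Field r"
  have "\<And>C. C \<in> F \<Longrightarrow> unbounded C"
    using clubs unfolding club_def by blast
  then have "\<exists>\<delta>. lt r \<beta> \<delta> \<and> (\<forall>C\<in>F. \<delta> \<in> acc r C)"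
    by (rule exists_common_limit_point[OF _ small \<beta>])
  then obtain \<delta> where "lt r \<beta> \<delta>" "\<forall>C\<in>F. \<delta> \<in> acc r C"
    by blast
  moreover have "\<forall>C\<in>F. \<delta> \<in> C"
    using calculation(2) clubs unfolding club_def by blast
  ultimately show "\<exists>\<gamma>\<in>Field r \<inter> \<Inter>F. lt r \<beta> \<gamma>"
    using lt_Field by blast
qed

lemma exists_increasing_sequence:
  assumes C: "C \<subseteq> Field r" and unbounded: "unbounded C" and \<beta>: "\<beta> \<in> Field r"
  shows "\<exists>f. \<forall>i\<in>Field r. f i \<in> C \<and> lt r \<beta> (f i) \<and> (\<forall>j. lt r j i \<longrightarrow> lt r (f j) (f i))"
proof -
  define P where "P g i y \<longleftrightarrow> y \<in> C \<and> lt r \<beta> y \<and> (\<forall>j. lt r j i \<longrightarrow> lt r (g j) y)" for g i y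
  define f where "f = wo_rel.worec r (\<lambda>g i. SOME y. P g i y)"
  have f_unfold: "f i = (SOME y. P f i y)" for i
    unfolding f_def
  proof (rule worec_unfold)
    fix g h :: "'a \<Rightarrow> 'a" and x
    assume "\<And>y. lt r y x \<Longrightarrow> g y = h y"
    then have "P g x = P h x"
      unfolding P_def by (intro ext) auto
    then show "(SOME y. P g x y) = (SOME y. P h x y)"
      by simp
  qed
  have "P f i (f i)" if "i \<in> Field r" for i
    using that
  proof (induction i rule: lt_induct)
    case (1 i)
    have "f j \<in> C" if "lt r j i" for j
      using 1(1)[OF that] lt_Field[OF that] unfolding P_def by blast
    then have "f ` underS r i \<subseteq> Field r"
      using C unfolding underS_eq by blast
    moreover have "|f ` underS r i| <o r"
      by (rule ordLeq_ordLess_trans[OF card_of_image card_of_underS[OF Card_order_r 1(2)]])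
    ultimately obtain g where g: "lt r \<beta> g" "\<And>x. x \<in> f ` underS r i \<Longrightarrow> lt r x g"
      using ordLess_strict_upper_bound \<beta> by blast
    obtain y where "y \<in> C" "lt r g y"
      using unbounded lt_Field[OF g(1)] by blast
    then have "P f i y"
      unfolding P_def using g lt_trans unfolding underS_eq by blast
    then show ?case
      unfolding f_unfold[of i] by (rule someI)
  qed
  then show ?thesis
    unfolding P_def by (intro exI[of _ f]) blast
qed

lemma exists_diagonal_club_sequence:
  assumes W: "\<And>E. club r (W E)"
  shows "\<exists>Es. (\<forall>i\<in>Field r. club r (Es i)) \<and> (\<forall>i j. (j, i) \<in> r \<longrightarrow> Es i \<subseteq> Es j) \<and>
    (\<forall>i j. lt r j i \<longrightarrow> Es i \<subseteq> W (Es j))"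
proof -
  define Es where "Es = wo_rel.worec r (\<lambda>G i. Field r \<inter> \<Inter>((\<lambda>j. W (G j)) ` underS r i))"
  have Es_eq: "Es i = Field r \<inter> \<Inter>((\<lambda>j. W (Es j)) ` underS r i)" for i
    unfolding Es_def
  proof (rule worec_unfold)
    fix G G' :: "'a \<Rightarrow> 'a set" and x
    assume "\<And>y. lt r y x \<Longrightarrow> G y = G' y"
    then have "(\<lambda>j. W (G j)) ` underS r x = (\<lambda>j. W (G' j)) ` underS r x"
      unfolding underS_eq by (intro image_cong) auto
    then show "Field r \<inter> \<Inter>((\<lambda>j. W (G j)) ` underS r x) = Field r \<inter> \<Inter>((\<lambda>j. W (G' j)) ` underS r x)"
      by simp
  qed
  have "club r (Es i)" if "i \<in> Field r" for i
  proof -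
    have "|(\<lambda>j. W (Es j)) ` underS r i| <o r"
      by (rule ordLeq_ordLess_trans[OF card_of_image card_of_underS[OF Card_order_r that]])
    then show ?thesis
      unfolding Es_eq[of i] using W by (intro club_Inter) auto
  qed
  moreover have "Es i \<subseteq> Es j" if "(j, i) \<in> r" for i j
  proof -
    have "underS r j \<subseteq> underS r i"
      using lt_le_trans[OF _ that] unfolding underS_eq by blast
    then show ?thesis
      unfolding Es_eq[of i] Es_eq[of j] by blast
  qed
  moreover have "Es i \<subseteq> W (Es j)" if "lt r j i" for i j
    using that unfolding Es_eq[of i] underS_eq by blast
  ultimately show ?thesis
    by blast
qed

lemma E_eq_Int_club_notin_ideal:
  assumes K: "is_ideal r K" "NS_restr r \<theta> \<subseteq> K" and D: "club r D"
  shows "E_eq r \<theta> \<inter> D \<notin> K"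
proof
  assume in_K: "E_eq r \<theta> \<inter> D \<in> K"
  let ?B = "Field r - E_eq r \<theta> \<inter> D"
  have "?B \<inter> E_eq r \<theta> \<inter> D = {}"
    by blast
  then have "\<not> stationary r (?B \<inter> E_eq r \<theta>)"
    using D unfolding stationary_def by blast
  then have "?B \<in> K"
    using K(2) unfolding NS_restr_def by blast
  then have "?B \<union> (E_eq r \<theta> \<inter> D) \<in> K"
    using in_K K(1) unfolding is_ideal_def by blast
  moreover have "?B \<union> (E_eq r \<theta> \<inter> D) = Field r"
    using D unfolding club_def by blast
  ultimately show False
    using K(1) unfolding is_ideal_def by simp
qed

lemma kappa_complete_UN_underS:
  assumes "kappa_complete r K" and "i \<in> Field r" and "\<And>j. lt r j i \<Longrightarrow> N j \<in> K"
  shows "(\<Union>j\<in>underS r i. N j) \<in> K"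
proof -
  have "|N ` underS r i| <o r"
    by (rule ordLeq_ordLess_trans[OF card_of_image card_of_underS[OF Card_order_r assms(2)]])
  moreover have "N ` underS r i \<subseteq> K"
    using assms(3) unfolding underS_eq by blast
  ultimately show ?thesis
    using assms(1) unfolding kappa_complete_def by blast
qed

end

locale regular_rho = regular_uncountable_order +
  fixes \<rho> :: 'a
  assumes rho_regular: "regular_infinite_cardinal r \<rho>"
begin

lemma rho_Field: "\<rho> \<in> Field r"
  using rho_regular unfolding regular_infinite_cardinal_def by blast

lemma infinite_below_rho: "infinite (underS r \<rho>)"
  using rho_regular unfolding regular_infinite_cardinal_def by blast

lemma exists_below_rho: "\<exists>i. lt r i \<rho>"
  using infinite_below_rho infinite_imp_nonempty unfolding underS_eq by blast

lemma exists_between_below_rho: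
  assumes "lt r i \<rho>"
  shows "\<exists>j. lt r i j \<and> lt r j \<rho>"
proof -
  obtain A where "sup_eq r A \<rho>"
    using rho_regular unfolding regular_infinite_cardinal_def cf_eq_def by blast
  then show ?thesis
    using assms unfolding sup_eq_def underS_eq by blast
qed

lemma small_bounded_below_rho:
  assumes M: "M \<subseteq> underS r \<rho>" and small: "|M| <o |underS r \<rho>|"
  shows "\<exists>i. lt r i \<rho> \<and> (\<forall>m\<in>M. (m, i) \<in> r)"
proof (rule ccontr)
  assume no_bound: "\<not> ?thesis"
  have "sup_eq r M \<rho>"
    unfolding sup_eq_def
  proof (intro conjI allI impI M)
    fix i assume i: "lt r i \<rho>"
    then obtain m where m: "m \<in> M" "(m, i) \<notin> r"
      using no_bound by blast
    then have "m \<in> Field r"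
      using M lt_Field unfolding underS_eq by blast
    then have "lt r i m"
      using not_le_imp_lt[OF _ _ m(2)] lt_Field[OF i] by blast
    then show "\<exists>m\<in>M. lt r i m"
      using m(1) by blast
  qed
  then have "|underS r \<rho>| \<le>o |M|"
    using rho_regular unfolding regular_infinite_cardinal_def cf_eq_def by blast
  then show False
    using small not_ordLess_ordLeq by blast
qed

definition rho_tail :: "'a filter" where
  "rho_tail = (INF i\<^sub>0\<in>underS r \<rho>. principal {i. lt r i \<rho> \<and> (i\<^sub>0, i) \<in> r})"

lemma eventually_rho_tail:
  "eventually P rho_tail \<longleftrightarrow> (\<exists>i\<^sub>0. lt r i\<^sub>0 \<rho> \<and> (\<forall>i. lt r i \<rho> \<longrightarrow> (i\<^sub>0, i) \<in> r \<longrightarrow> P i))"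
proof -
  have "\<exists>c\<in>underS r \<rho>. principal {i. lt r i \<rho> \<and> (c, i) \<in> r} \<le>
      inf (principal {i. lt r i \<rho> \<and> (a, i) \<in> r}) (principal {i. lt r i \<rho> \<and> (b, i) \<in> r})"
    if "a \<in> underS r \<rho>" "b \<in> underS r \<rho>" for a b
  proof (cases "(a, b) \<in> r")
    case True
    then show ?thesis
      using that le_trans[OF True] by (intro bexI[of _ b]) (auto simp: inf_principal)
  next
    case False
    then have "(b, a) \<in> r"
      using that not_le_imp_lt lt_imp_le lt_Field unfolding underS_eq by blast
    then show ?thesis
      using that le_trans[OF \<open>(b, a) \<in> r\<close>] by (intro bexI[of _ a]) (auto simp: inf_principal)
  qed
  moreover have "underS r \<rho> \<noteq> {}"
    using exists_below_rho unfolding underS_eq by blast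
  ultimately show ?thesis
    unfolding rho_tail_def by (subst eventually_INF_base) (auto simp: eventually_principal underS_eq)
qed

lemma eventually_rho_tail_Ball:
  assumes small: "|\<Gamma>| <o |underS r \<rho>|" and ev: "\<forall>\<gamma>\<in>\<Gamma>. eventually (P \<gamma>) rho_tail"
  shows "eventually (\<lambda>i. \<forall>\<gamma>\<in>\<Gamma>. P \<gamma> i) rho_tail"
proof -
  define start where
    "start \<gamma> = (SOME i\<^sub>0. lt r i\<^sub>0 \<rho> \<and> (\<forall>i. lt r i \<rho> \<longrightarrow> (i\<^sub>0, i) \<in> r \<longrightarrow> P \<gamma> i))" for \<gamma>
  have start: "lt r (start \<gamma>) \<rho> \<and> (\<forall>i. lt r i \<rho> \<longrightarrow> (start \<gamma>, i) \<in> r \<longrightarrow> P \<gamma> i)"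
    if "\<gamma> \<in> \<Gamma>" for \<gamma>
  proof -
    have "\<exists>i\<^sub>0. lt r i\<^sub>0 \<rho> \<and> (\<forall>i. lt r i \<rho> \<longrightarrow> (i\<^sub>0, i) \<in> r \<longrightarrow> P \<gamma> i)"
      using ev that unfolding eventually_rho_tail by blast
    then show ?thesis
      unfolding start_def by (rule someI_ex)
  qed
  have "start ` \<Gamma> \<subseteq> underS r \<rho>"
    using start unfolding underS_eq by blast
  moreover have "|start ` \<Gamma>| <o |underS r \<rho>|"
    by (rule ordLeq_ordLess_trans[OF card_of_image small])
  ultimately have "\<exists>i. lt r i \<rho> \<and> (\<forall>m\<in>start ` \<Gamma>. (m, i) \<in> r)"
    by (rule small_bounded_below_rho)
  then obtain i\<^sub>0 where i\<^sub>0: "lt r i\<^sub>0 \<rho>" "\<forall>\<gamma>\<in>\<Gamma>. (start \<gamma>, i\<^sub>0) \<in> r"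
    by blast
  have "P \<gamma> i" if "\<gamma> \<in> \<Gamma>" "lt r i \<rho>" "(i\<^sub>0, i) \<in> r" for \<gamma> i
    using start[OF that(1)] le_trans[of "start \<gamma>" i\<^sub>0 i] i\<^sub>0(2) that by blast
  then show ?thesis
    unfolding eventually_rho_tail using i\<^sub>0(1) by blast
qed

lemma eventually_constant_antitone:
  assumes antitone: "\<And>i j. (j, i) \<in> r \<Longrightarrow> lt r i \<rho> \<Longrightarrow> (s i, s j) \<in> r"
    and in_Field: "\<And>i. lt r i \<rho> \<Longrightarrow> s i \<in> Field r"
  shows "\<exists>c. eventually (\<lambda>i. s i = c) rho_tail"
proof -
  let ?V = "s ` underS r \<rho>"
  have V: "?V \<subseteq> Field r"
    using in_Field unfolding underS_eq by blast
  have "?V \<noteq> {}"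
    using exists_below_rho unfolding underS_eq by blast
  then have "wo_rel.minim r ?V \<in> ?V"
    by (rule wo_rel.minim_in[OF wo_rel_r V])
  then obtain i\<^sub>1 where i\<^sub>1: "wo_rel.minim r ?V = s i\<^sub>1" "i\<^sub>1 \<in> underS r \<rho>"
    by (rule imageE)
  have "s i = s i\<^sub>1" if i: "lt r i \<rho>" "(i\<^sub>1, i) \<in> r" for i
  proof (rule le_antisym)
    show "(s i, s i\<^sub>1) \<in> r"
      using antitone[OF i(2,1)] .
    have "s i \<in> ?V"
      using i(1) unfolding underS_eq by blast
    then show "(s i\<^sub>1, s i) \<in> r"
      unfolding i\<^sub>1(1)[symmetric] by (rule wo_rel.minim_least[OF wo_rel_r V])
  qed
  then show ?thesis
    using i\<^sub>1(2) unfolding eventually_rho_tail underS_eq by blast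
qed

lemma E_eq_disjoint_E_ge:
  assumes "lt r \<theta> \<rho>" and "\<alpha> \<in> E_eq r \<theta>"
  shows "\<alpha> \<notin> E_ge r \<rho>"
proof
  assume "\<alpha> \<in> E_ge r \<rho>"
  obtain B where B: "sup_eq r B \<alpha>" "|B| =o |underS r \<theta>|"
    using assms(2) unfolding E_eq_def cf_eq_def by blast
  have "|underS r \<rho>| \<le>o |B|"
    using \<open>\<alpha> \<in> E_ge r \<rho>\<close> B(1) unfolding E_ge_def cf_ge_def by blast
  then have "|underS r \<rho>| \<le>o |underS r \<theta>|"
    using B(2) ordLeq_ordIso_trans by blast
  moreover have "|underS r \<theta>| <o |underS r \<rho>|"
    using rho_regular assms(1) unfolding regular_infinite_cardinal_def by blast
  ultimately show False
    using not_ordLess_ordLeq by blast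
qed

lemma increasing_below_rho_imp_lt:
  assumes inc: "\<And>i j. lt r j i \<Longrightarrow> lt r i \<rho> \<Longrightarrow> lt r (f j) (f i)"
    and "lt r i \<rho>" and "lt r j \<rho>" and "lt r (f j) (f i)"
  shows "lt r j i"
proof (rule ccontr)
  assume "\<not> lt r j i"
  then have "i = j \<or> lt r i j"
    using not_lt_imp_le lt_Field assms(2,3) unfolding lt_def by blast
  then show False
    using assms(4) inc[OF _ assms(3)] lt_irrefl lt_trans by metis
qed

lemma cf_ge_sup_of_increasing:
  assumes inc: "\<And>i j. lt r j i \<Longrightarrow> lt r i \<rho> \<Longrightarrow> lt r (f j) (f i)"
    and sup: "sup_eq r (f ` underS r \<rho>) \<delta>"
  shows "cf_ge r \<delta> \<rho>"
  unfolding cf_ge_def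
proof (intro allI impI)
  fix B assume B: "sup_eq r B \<delta>"
  define index where "index b = (SOME i. lt r i \<rho> \<and> lt r b (f i))" for b
  have index: "lt r (index b) \<rho> \<and> lt r b (f (index b))" if "b \<in> B" for b
  proof -
    have "lt r b \<delta>"
      using B that unfolding sup_eq_def underS_eq by blast
    then have "\<exists>i. lt r i \<rho> \<and> lt r b (f i)"
      using sup unfolding sup_eq_def underS_eq by blast
    then show ?thesis
      unfolding index_def by (rule someI_ex)
  qed
  have "sup_eq r (index ` B) \<rho>"
    unfolding sup_eq_def
  proof (intro conjI allI impI subsetI)
    show "i \<in> underS r \<rho>" if "i \<in> index ` B" for i
      using that index unfolding underS_eq by blast
    fix j assume j: "lt r j \<rho>"
    then have "lt r (f j) \<delta>"
      using sup unfolding sup_eq_def underS_eq by blast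
    then obtain b where b: "b \<in> B" "lt r (f j) b"
      using B unfolding sup_eq_def by blast
    then have "lt r (f j) (f (index b))"
      using lt_trans index by blast
    then have "lt r j (index b)"
      using increasing_below_rho_imp_lt[where f = f, OF inc] index[OF b(1)] j by blast
    then show "\<exists>i\<in>index ` B. lt r j i"
      using b(1) by blast
  qed
  then have "|underS r \<rho>| \<le>o |index ` B|"
    using rho_regular unfolding regular_infinite_cardinal_def cf_eq_def by blast
  then show "|underS r \<rho>| \<le>o |B|"
    using card_of_image ordLeq_transitive by blast
qed

lemma exists_sup_of_increasing_below_rho:
  assumes in_Field: "\<And>i. lt r i \<rho> \<Longrightarrow> f i \<in> Field r"
    and inc: "\<And>i j. lt r j i \<Longrightarrow> lt r i \<rho> \<Longrightarrow> lt r (f j) (f i)"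
  shows "\<exists>\<delta>. sup_eq r (f ` underS r \<rho>) \<delta>"
proof -
  let ?X = "f ` underS r \<rho>"
  have "|?X| <o r"
    by (rule ordLeq_ordLess_trans[OF card_of_image card_of_underS[OF Card_order_r rho_Field]])
  moreover have "?X \<subseteq> Field r"
    using in_Field unfolding underS_eq by blast
  ultimately obtain g where "\<And>x. x \<in> ?X \<Longrightarrow> lt r x g"
    using ordLess_strict_upper_bound[OF _ _ rho_Field] by blast
  then have bounded: "?X \<subseteq> under r g"
    using lt_imp_le unfolding under_def by blast
  have "supr ?X \<notin> ?X"
  proof
    assume "supr ?X \<in> ?X"
    then obtain j where j: "supr ?X = f j" "lt r j \<rho>"
      unfolding underS_eq by (rule imageE) simp
    then obtain j' where "lt r j j'" "lt r j' \<rho>"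
      using exists_between_below_rho by blast
    then have "lt r (supr ?X) (f j')"
      using inc j by simp
    moreover have "(f j', supr ?X) \<in> r"
      using \<open>lt r j' \<rho>\<close> by (intro supr_upper[OF bounded]) (simp add: underS_eq)
    ultimately show False
      using le_imp_not_lt by blast
  qed
  then show ?thesis
    using sup_eq_supr[OF bounded] by blast
qed

lemma club_Int_E_ge_unbounded:
  assumes C: "club r C"
  shows "unbounded (C \<inter> E_ge r \<rho>)"
proof
  fix \<beta> assume \<beta>: "\<beta> \<in> Field r"
  have C_Field: "C \<subseteq> Field r" and C_unbounded: "unbounded C" and C_closed: "acc r C \<subseteq> C"
    using C unfolding club_def by blast+
  obtain f where f: "\<And>i. i \<in> Field r \<Longrightarrow> f i \<in> C \<and> lt r \<beta> (f i) \<and> (\<forall>j. lt r j i \<longrightarrow> lt r (f j) (f i))"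
    using exists_increasing_sequence[OF C_Field C_unbounded \<beta>] by blast
  have f_C: "f i \<in> C" and \<beta>_f: "lt r \<beta> (f i)" if "lt r i \<rho>" for i
    using f lt_Field[OF that] by blast+
  have inc: "lt r (f j) (f i)" if "lt r j i" "lt r i \<rho>" for i j
    using f lt_Field[OF that(2)] that(1) by blast
  have "\<And>i. lt r i \<rho> \<Longrightarrow> f i \<in> Field r"
    using f_C C_Field by blast
  then have "\<exists>\<delta>. sup_eq r (f ` underS r \<rho>) \<delta>"
    by (rule exists_sup_of_increasing_below_rho[OF _ inc])
  then obtain \<delta> where sup: "sup_eq r (f ` underS r \<rho>) \<delta>"
    by blast
  obtain j where j: "lt r j \<rho>"
    using exists_below_rho by blast
  then have ne: "f ` underS r \<rho> \<noteq> {}"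
    unfolding underS_eq by blast
  have X_C: "f ` underS r \<rho> \<subseteq> C"
    using f_C unfolding underS_eq by blast
  have "\<delta> \<in> C"
    using acc_if_sup_eq[OF sup X_C ne] C_closed by blast
  moreover have "\<delta> \<in> acc r (Field r)"
    using acc_if_sup_eq[OF sup _ ne] X_C C_Field by blast
  then have "\<delta> \<in> E_ge r \<rho>"
    unfolding E_ge_def using cf_ge_sup_of_increasing[OF inc sup] by blast
  moreover have "lt r \<beta> \<delta>"
    using \<beta>_f[OF j] j sup lt_trans unfolding sup_eq_def underS_eq by blast
  ultimately show "\<exists>\<gamma>\<in>C \<inter> E_ge r \<rho>. lt r \<beta> \<gamma>"
    by blast
qed

lemma finite_ordLess_below_rho: "finite A \<Longrightarrow> |A| <o |underS r \<rho>|"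
  using finite_ordLess_infinite[OF card_of_Well_order card_of_Well_order] infinite_below_rho
  by (simp add: Field_card_of)

lemma exists_short_cofinal:
  assumes x: "x \<in> Field r" and not_E_ge: "x \<notin> E_ge r \<rho>"
  shows "\<exists>B. B \<subseteq> underS r x \<and> (\<forall>a. lt r a x \<longrightarrow> (\<exists>\<gamma>\<in>B. (a, \<gamma>) \<in> r)) \<and> |B| <o |underS r \<rho>|"
proof (cases "x \<in> acc r (Field r)")
  case True
  then obtain B where B: "sup_eq r B x" "\<not> |underS r \<rho>| \<le>o |B|"
    using not_E_ge unfolding E_ge_def cf_ge_def by blast
  have "|B| <o |underS r \<rho>|"
    using B(2) not_ordLeq_iff_ordLess[OF card_of_Well_order card_of_Well_order] by blast
  moreover have "\<forall>a. lt r a x \<longrightarrow> (\<exists>\<gamma>\<in>B. (a, \<gamma>) \<in> r)"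
    using B(1) lt_imp_le unfolding sup_eq_def by blast
  ultimately show ?thesis
    using B(1) unfolding sup_eq_def by blast
next
  case False
  show ?thesis
  proof (cases "underS r x = {}")
    case True
    then show ?thesis
      using finite_ordLess_below_rho[of "{}"] unfolding underS_eq by auto
  next
    case nonempty: False
    then obtain b where b: "lt r b x" "\<And>y. lt r y x \<Longrightarrow> \<not> lt r b y"
      using False x lt_Field unfolding acc_def sup_eq_def underS_eq by blast
    then have "\<forall>a. lt r a x \<longrightarrow> (\<exists>\<gamma>\<in>{b}. (a, \<gamma>) \<in> r)"
      using not_lt_imp_le lt_Field by blast
    then show ?thesis
      using b(1) finite_ordLess_below_rho[of "{b}"] unfolding underS_eq by blast
  qed
qed

definition short_cofinal :: "'a \<Rightarrow> 'a set" where
  "short_cofinal x = (SOME B. B \<subseteq> underS r x \<and> (\<forall>a. lt r a x \<longrightarrow> (\<exists>\<gamma>\<in>B. (a, \<gamma>) \<in> r)) \<and>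
     |B| <o |underS r \<rho>| )"

lemma short_cofinal:
  assumes "x \<in> Field r" and "x \<notin> E_ge r \<rho>"
  shows "short_cofinal x \<subseteq> underS r x"
    and "lt r a x \<Longrightarrow> \<exists>\<gamma>\<in>short_cofinal x. (a, \<gamma>) \<in> r"
    and "|short_cofinal x| <o |underS r \<rho>|"
  using someI_ex[OF exists_short_cofinal[OF assms]] unfolding short_cofinal_def[symmetric] by blast+

text \<open>
  For \<gamma> \<in> short_cofinal x the test in ladder_step always succeeds; it is only there to make the
  recursion well-founded.
\<close>
definition ladder_step :: "'a set \<Rightarrow> ('a \<Rightarrow> 'a set) \<Rightarrow> 'a \<Rightarrow> 'a \<Rightarrow> 'a set" where
  "ladder_step A L x \<gamma> = (if lt r (supr (A \<inter> under r \<gamma>)) x then L (supr (A \<inter> under r \<gamma>)) else {})"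

definition ladder :: "'a set \<Rightarrow> 'a \<Rightarrow> 'a set" where
  "ladder A = wo_rel.worec r
     (\<lambda>L x. if x \<in> E_ge r \<rho> then A \<inter> {x} else \<Union>\<gamma>\<in>short_cofinal x. ladder_step A L x \<gamma>)"

lemma ladder_eq:
  "ladder A x =
    (if x \<in> E_ge r \<rho> then A \<inter> {x} else \<Union>\<gamma>\<in>short_cofinal x. ladder_step A (ladder A) x \<gamma>)"
  unfolding ladder_def
proof (rule worec_unfold)
  fix L L' :: "'a \<Rightarrow> 'a set" and x
  assume "\<And>y. lt r y x \<Longrightarrow> L y = L' y"
  then have "ladder_step A L x \<gamma> = ladder_step A L' x \<gamma>" for \<gamma>
    unfolding ladder_step_def by simp
  then show "(if x \<in> E_ge r \<rho> then A \<inter> {x} else \<Union>\<gamma>\<in>short_cofinal x. ladder_step A L x \<gamma>) =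
      (if x \<in> E_ge r \<rho> then A \<inter> {x} else \<Union>\<gamma>\<in>short_cofinal x. ladder_step A L' x \<gamma>)"
    by simp
qed

lemma ladder_subset: "ladder A x \<subseteq> A \<inter> under r x"
proof (induction x rule: lt_induct)
  case (1 x)
  show ?case
  proof (cases "x \<in> E_ge r \<rho>")
    case True
    then have "x \<in> Field r"
      unfolding E_ge_def acc_def by blast
    then show ?thesis
      using True le_refl unfolding ladder_eq[of A x] under_def by auto
  next
    case False
    have "ladder_step A (ladder A) x \<gamma> \<subseteq> A \<inter> under r x" for \<gamma>
    proof (cases "lt r (supr (A \<inter> under r \<gamma>)) x")
      case True
      then show ?thesis
        using 1[OF True] le_trans lt_imp_le[OF True] unfolding ladder_step_def under_def by auto
    qed (simp add: ladder_step_def)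
    then show ?thesis
      using False unfolding ladder_eq[of A x] by auto
  qed
qed

lemma ladder_supr_subset:
  assumes x: "x \<in> Field r" "x \<notin> E_ge r \<rho>" and \<gamma>: "\<gamma> \<in> short_cofinal x"
  shows "lt r (supr (A \<inter> under r \<gamma>)) x" and "ladder A (supr (A \<inter> under r \<gamma>)) \<subseteq> ladder A x"
proof -
  have \<gamma>_x: "lt r \<gamma> x"
    using short_cofinal(1)[OF x] \<gamma> unfolding underS_eq by blast
  have "(supr (A \<inter> under r \<gamma>), \<gamma>) \<in> r"
    using supr_least[of "A \<inter> under r \<gamma>" \<gamma>] lt_Field[OF \<gamma>_x] unfolding under_def by blast
  then show s_x: "lt r (supr (A \<inter> under r \<gamma>)) x"
    using le_lt_trans \<gamma>_x by blast
  show "ladder A (supr (A \<inter> under r \<gamma>)) \<subseteq> ladder A x"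
    using ladder_eq[of A x] x(2) \<gamma> s_x unfolding ladder_step_def by auto
qed

lemma ladder_unbounded:
  assumes C: "club r C"
  shows "x \<in> acc r (C \<inter> E_ge r \<rho>) \<Longrightarrow> x \<notin> E_ge r \<rho> \<Longrightarrow> lt r \<eta> x \<Longrightarrow>
    \<exists>l\<in>ladder (C \<inter> E_ge r \<rho>) x. lt r \<eta> l"
proof (induction x arbitrary: \<eta> rule: lt_induct)
  case (1 x)
  let ?A = "C \<inter> E_ge r \<rho>"
  obtain a where a: "a \<in> ?A" "lt r \<eta> a" "lt r a x"
    using accD[OF 1(2,4)] by blast
  have x_Field: "x \<in> Field r"
    using lt_Field[OF a(3)] by blast
  obtain \<gamma> where \<gamma>: "\<gamma> \<in> short_cofinal x" "(a, \<gamma>) \<in> r"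
    using short_cofinal(2)[OF x_Field 1(3) a(3)] by blast
  let ?B = "?A \<inter> under r \<gamma>"
  let ?s = "supr ?B"
  have B: "?B \<subseteq> under r \<gamma>"
    by blast
  have a_B: "a \<in> ?B"
    using a(1) \<gamma>(2) unfolding under_def by blast
  have \<eta>_s: "lt r \<eta> ?s"
    using lt_le_trans[OF a(2) supr_upper[OF B a_B]] .
  have "\<exists>l\<in>ladder ?A ?s. lt r \<eta> l"
  proof (cases "?s \<in> ?A")
    case True
    then have "ladder ?A ?s = {?s}"
      using ladder_eq[of ?A ?s] by simp
    then show ?thesis
      using \<eta>_s by blast
  next
    case False
    then have "sup_eq r ?B ?s"
      using sup_eq_supr[OF B] by blast
    then have s_acc: "?s \<in> acc r ?A"
      using acc_if_sup_eq[of ?B ?s ?A] a_B by blast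
    then have "?s \<in> C"
      using acc_mono[of ?A C] C unfolding club_def by blast
    then have "?s \<notin> E_ge r \<rho>"
      using False by blast
    then show ?thesis
      using 1(1)[OF ladder_supr_subset(1)[OF x_Field 1(3) \<gamma>(1)] s_acc _ \<eta>_s] by blast
  qed
  then show ?case
    using ladder_supr_subset(2)[OF x_Field 1(3) \<gamma>(1)] by blast
qed

lemma ladder_sup_eq:
  assumes "club r C" and "x \<in> acc r (C \<inter> E_ge r \<rho>)" and "x \<notin> E_ge r \<rho>"
  shows "sup_eq r (ladder (C \<inter> E_ge r \<rho>) x) x"
proof -
  have "ladder (C \<inter> E_ge r \<rho>) x \<subseteq> underS r x"
    using ladder_subset[of "C \<inter> E_ge r \<rho>" x] assms(3) unfolding under_def underS_def by blast
  then show ?thesis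
    using ladder_unbounded[OF assms] unfolding sup_eq_def by blast
qed

lemma eventually_constant_Int_singleton:
  assumes antitone: "\<And>i j. (j, i) \<in> r \<Longrightarrow> As i \<subseteq> As j"
  shows "\<exists>L. eventually (\<lambda>i. As i \<inter> {x} = L) rho_tail"
proof (cases "\<exists>i\<^sub>1. lt r i\<^sub>1 \<rho> \<and> x \<notin> As i\<^sub>1")
  case True
  then have "eventually (\<lambda>i. As i \<inter> {x} = {}) rho_tail"
    unfolding eventually_rho_tail using antitone by blast
  then show ?thesis
    by blast
next
  case False
  then have "eventually (\<lambda>i. As i \<inter> {x} = {x}) rho_tail"
    unfolding eventually_rho_tail using exists_below_rho by blast
  then show ?thesis
    by blast
qed

lemma ladder_step_eventually_constant:
  assumes antitone: "\<And>i j. (j, i) \<in> r \<Longrightarrow> As i \<subseteq> As j"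
    and below: "\<And>y. lt r y x \<Longrightarrow> \<exists>L. eventually (\<lambda>i. ladder (As i) y = L) rho_tail"
  shows "\<exists>L. eventually (\<lambda>i. ladder_step (As i) (ladder (As i)) x \<gamma> = L) rho_tail"
proof -
  let ?s = "\<lambda>i. supr (As i \<inter> under r \<gamma>)"
  have "\<exists>c. eventually (\<lambda>i. ?s i = c) rho_tail"
  proof (rule eventually_constant_antitone)
    show "(?s i, ?s j) \<in> r" if "(j, i) \<in> r" for i j
      using antitone[OF that] by (intro supr_mono) auto
    show "?s i \<in> Field r" for i
      by (rule supr_in_Field) blast
  qed
  then obtain c where c: "eventually (\<lambda>i. ?s i = c) rho_tail"
    by blast
  show ?thesis
  proof (cases "lt r c x")
    case True
    then obtain L where "eventually (\<lambda>i. ladder (As i) c = L) rho_tail"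
      using below by blast
    then have "eventually (\<lambda>i. ladder_step (As i) (ladder (As i)) x \<gamma> = L) rho_tail"
      using c by eventually_elim (simp add: ladder_step_def True)
    then show ?thesis
      by blast
  next
    case False
    have "eventually (\<lambda>i. ladder_step (As i) (ladder (As i)) x \<gamma> = {}) rho_tail"
      using c by eventually_elim (simp add: ladder_step_def False)
    then show ?thesis
      by blast
  qed
qed

lemma ladder_eventually_constant:
  assumes antitone: "\<And>i j. (j, i) \<in> r \<Longrightarrow> As i \<subseteq> As j"
  shows "x \<in> Field r \<Longrightarrow> \<exists>L. eventually (\<lambda>i. ladder (As i) x = L) rho_tail"
proof (induction x rule: lt_induct)
  case (1 x)
  show ?case
  proof (cases "x \<in> E_ge r \<rho>")
    case True
    then have "ladder (As i) x = As i \<inter> {x}" for i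
      using ladder_eq[of "As i" x] by simp
    then show ?thesis
      using eventually_constant_Int_singleton[OF antitone] by simp
  next
    case False
    have below: "\<And>y. lt r y x \<Longrightarrow> \<exists>L. eventually (\<lambda>i. ladder (As i) y = L) rho_tail"
      using 1(1) lt_Field by blast
    have "\<exists>L. eventually (\<lambda>i. ladder_step (As i) (ladder (As i)) x \<gamma> = L) rho_tail" for \<gamma>
      using ladder_step_eventually_constant[OF antitone below] .
    then obtain L where L:
      "eventually (\<lambda>i. ladder_step (As i) (ladder (As i)) x \<gamma> = L \<gamma>) rho_tail" for \<gamma>
      by metis
    have "eventually (\<lambda>i. \<forall>\<gamma>\<in>short_cofinal x. ladder_step (As i) (ladder (As i)) x \<gamma> = L \<gamma>)
        rho_tail"
      by (rule eventually_rho_tail_Ball[OF short_cofinal(3)[OF 1(2) False]]) (use L in blast)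
    then have "eventually (\<lambda>i. ladder (As i) x = (\<Union>\<gamma>\<in>short_cofinal x. L \<gamma>)) rho_tail"
      by eventually_elim (simp add: ladder_eq[of _ x] False)
    then show ?thesis
      by blast
  qed
qed

definition ladder_system :: "'a set \<Rightarrow> 'a \<Rightarrow> 'a set" where
  "ladder_system E \<alpha> =
    (if sup_eq r (ladder (E \<inter> E_ge r \<rho>) \<alpha>) \<alpha> then ladder (E \<inter> E_ge r \<rho>) \<alpha> else E_ge r \<rho> \<inter> underS r \<alpha>)"

lemma ladder_system_cofinal:
  assumes "\<alpha> \<in> acc r (E_ge r \<rho>)"
  shows "ladder_system E \<alpha> \<subseteq> E_ge r \<rho> \<inter> underS r \<alpha> \<and> sup_eq r (ladder_system E \<alpha>) \<alpha>"
proof (cases "sup_eq r (ladder (E \<inter> E_ge r \<rho>) \<alpha>) \<alpha>")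
  case True
  then show ?thesis
    using ladder_subset[of "E \<inter> E_ge r \<rho>" \<alpha>] unfolding ladder_system_def sup_eq_def by auto
next
  case False
  then show ?thesis
    using assms unfolding ladder_system_def acc_def by auto
qed

lemma exists_ladder_system_in_next_club:
  assumes Es_club: "\<And>i. i \<in> Field r \<Longrightarrow> club r (Es i)"
    and Es_antitone: "\<And>i j. (j, i) \<in> r \<Longrightarrow> Es i \<subseteq> Es j"
    and Es_W: "\<And>i j. lt r j i \<Longrightarrow> Es i \<subseteq> W (Es j)"
    and \<alpha>: "\<alpha> \<in> acc r (Es \<rho> \<inter> E_ge r \<rho>)" "\<alpha> \<notin> E_ge r \<rho>"
  shows "\<exists>j. lt r j \<rho> \<and> ladder_system (Es j) \<alpha> \<subseteq> W (Es j)"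
proof -
  have "\<exists>L. eventually (\<lambda>i. ladder (Es i \<inter> E_ge r \<rho>) \<alpha> = L) rho_tail"
  proof (rule ladder_eventually_constant)
    show "Es i \<inter> E_ge r \<rho> \<subseteq> Es j \<inter> E_ge r \<rho>" if "(j, i) \<in> r" for i j
      using Es_antitone[OF that] by blast
    show "\<alpha> \<in> Field r"
      using \<alpha>(1) acc_subset_Field by blast
  qed
  then obtain L i\<^sub>0 where i\<^sub>0: "lt r i\<^sub>0 \<rho>"
    and L: "\<And>i. lt r i \<rho> \<Longrightarrow> (i\<^sub>0, i) \<in> r \<Longrightarrow> ladder (Es i \<inter> E_ge r \<rho>) \<alpha> = L"
    unfolding eventually_rho_tail by blast
  obtain i\<^sub>1 where i\<^sub>1: "lt r i\<^sub>0 i\<^sub>1" "lt r i\<^sub>1 \<rho>"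
    using exists_between_below_rho[OF i\<^sub>0] by blast
  have "Es \<rho> \<inter> E_ge r \<rho> \<subseteq> Es i\<^sub>0 \<inter> E_ge r \<rho>"
    using Es_antitone[OF lt_imp_le[OF i\<^sub>0]] by blast
  then have "\<alpha> \<in> acc r (Es i\<^sub>0 \<inter> E_ge r \<rho>)"
    using \<alpha>(1) acc_mono by blast
  moreover have "club r (Es i\<^sub>0)"
    using Es_club lt_Field[OF i\<^sub>0] by blast
  ultimately have "sup_eq r (ladder (Es i\<^sub>0 \<inter> E_ge r \<rho>) \<alpha>) \<alpha>"
    using ladder_sup_eq[OF _ _ \<alpha>(2)] by blast
  then have "ladder_system (Es i\<^sub>0) \<alpha> = L"
    unfolding ladder_system_def using L[OF i\<^sub>0 le_refl] lt_Field[OF i\<^sub>0] by simp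
  also have "\<dots> = ladder (Es i\<^sub>1 \<inter> E_ge r \<rho>) \<alpha>"
    using L[OF i\<^sub>1(2) lt_imp_le[OF i\<^sub>1(1)]] by simp
  also have "\<dots> \<subseteq> Es i\<^sub>1"
    using ladder_subset[of "Es i\<^sub>1 \<inter> E_ge r \<rho>" \<alpha>] by blast
  also have "\<dots> \<subseteq> W (Es i\<^sub>0)"
    using Es_W[OF i\<^sub>1(1)] .
  finally show ?thesis
    using i\<^sub>0 by blast
qed

lemma exists_positive_ladder_system:
  assumes \<theta>_\<rho>: "lt r \<theta> \<rho>"
    and K: "is_ideal r K" "kappa_complete r K" "NS_restr r \<theta> \<subseteq> K"
  shows "\<exists>E. \<forall>C. club r C \<longrightarrow>
    {\<alpha> \<in> E_eq r \<theta> \<inter> acc r (E_ge r \<rho>). ladder_system E \<alpha> \<subseteq> C} \<notin> K"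
proof (rule ccontr)
  let ?N = "\<lambda>E C. {\<alpha> \<in> E_eq r \<theta> \<inter> acc r (E_ge r \<rho>). ladder_system E \<alpha> \<subseteq> C}"
  assume "\<not> ?thesis"
  then have defeating_club: "\<exists>C. club r C \<and> ?N E C \<in> K" for E
    by blast
  define W where "W E = (SOME C. club r C \<and> ?N E C \<in> K)" for E
  have W: "club r (W E) \<and> ?N E (W E) \<in> K" for E
    unfolding W_def by (rule someI_ex[OF defeating_club])
  obtain Es where Es_club: "\<And>i. i \<in> Field r \<Longrightarrow> club r (Es i)"
    and Es_antitone: "\<And>i j. (j, i) \<in> r \<Longrightarrow> Es i \<subseteq> Es j"
    and Es_W: "\<And>i j. lt r j i \<Longrightarrow> Es i \<subseteq> W (Es j)"
    using exists_diagonal_club_sequence[of W] W by blast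
  let ?A = "Es \<rho> \<inter> E_ge r \<rho>"
  have "club r (acc r ?A)"
  proof (rule club_acc)
    show "?A \<subseteq> Field r"
      using Es_club[OF rho_Field] unfolding club_def by blast
    show "unbounded ?A"
      using club_Int_E_ge_unbounded[OF Es_club[OF rho_Field]] .
  qed
  then have positive: "E_eq r \<theta> \<inter> acc r ?A \<notin> K"
    using E_eq_Int_club_notin_ideal K(1,3) by blast
  define N where "N j = ?N (Es j) (W (Es j))" for j
  have "(\<Union>j\<in>underS r \<rho>. N j) \<in> K"
    by (rule kappa_complete_UN_underS[OF K(2) rho_Field]) (use W in \<open>simp add: N_def\<close>)
  moreover have "E_eq r \<theta> \<inter> acc r ?A \<subseteq> (\<Union>j\<in>underS r \<rho>. N j)"
  proof
    fix \<alpha> assume \<alpha>: "\<alpha> \<in> E_eq r \<theta> \<inter> acc r ?A"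
    then have acc_A: "\<alpha> \<in> acc r ?A" and not_E_ge: "\<alpha> \<notin> E_ge r \<rho>"
      using E_eq_disjoint_E_ge[OF \<theta>_\<rho>] by blast+
    have "\<exists>j. lt r j \<rho> \<and> ladder_system (Es j) \<alpha> \<subseteq> W (Es j)"
      using exists_ladder_system_in_next_club[where Es = Es and W = W,
          OF Es_club Es_antitone Es_W acc_A not_E_ge] .
    moreover have "\<alpha> \<in> acc r (E_ge r \<rho>)"
      using \<alpha> acc_mono[of ?A "E_ge r \<rho>"] by blast
    ultimately show "\<alpha> \<in> (\<Union>j\<in>underS r \<rho>. N j)"
      using \<alpha> unfolding N_def underS_eq by blast
  qed
  ultimately show False
    using positive K(1) unfolding is_ideal_def by blast
qed

end

theorem proposition5p3:
  fixes r :: "'a rel" and \<theta> \<rho> :: 'a and K :: "'a set set"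
  assumes "regular_uncountable r"
    and "regular_infinite_cardinal r \<theta>" and "regular_infinite_cardinal r \<rho>"
    and "lt r \<theta> \<rho>"
    and "is_ideal r K" and "kappa_complete r K"
    and "NS_restr r \<theta> \<subseteq> K"
  shows "\<exists>c :: 'a \<Rightarrow> 'a set.
     (\<forall>\<alpha> \<in> E_eq r \<theta> \<inter> acc r (E_ge r \<rho>).
         c \<alpha> \<subseteq> E_ge r \<rho> \<inter> underS r \<alpha> \<and> sup_eq r (c \<alpha>) \<alpha>) \<and>
     (\<forall>C. club r C \<longrightarrow>
         {\<alpha> \<in> E_eq r \<theta> \<inter> acc r (E_ge r \<rho>). c \<alpha> \<subseteq> C} \<in> Pow (Field r) - K)"
proof -
  interpret regular_rho r \<rho>
    using assms(1,3) by unfold_locales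
  obtain E where E: "\<forall>C. club r C \<longrightarrow>
      {\<alpha> \<in> E_eq r \<theta> \<inter> acc r (E_ge r \<rho>). ladder_system E \<alpha> \<subseteq> C} \<notin> K"
    using exists_positive_ladder_system assms(4-7) by blast
  have "E_eq r \<theta> \<inter> acc r (E_ge r \<rho>) \<subseteq> Field r"
    using acc_subset_Field by blast
  then show ?thesis
    using ladder_system_cofinal E by (intro exI[of _ "ladder_system E"]) blast
qed

end
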